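(* Let $s\geq 3$, let $p,q$ be coprime integers with $q>0$, and let $k\in G_{K_s}(p,q)$ satisfy $M=k^q$, $L=k^{-p}$. Suppose $G_{K_s}(p,q)$ acts (on the right) on $\mathbb{R}$ by orientation-preserving homeomorphisms. If $xk>x$ for every $x\in\mathbb{R}$, then $xl>x$ for every $x\in\mathbb{R}$.
   Context: Let $R=c\,l\,c\,l^{-1}c^{-1}l^{-s}c^{-1}l^{-1}c\,l\,c\,l^{s-1}$, $M=c$ and $L=c^{-(2s-2)}\,l\,c\,l^{s}\,c\,l^{s}\,c\,l\,c^{-(2s+9)}$, and $G_{K_s}(p,q)=\langle c,l\mid R,\ M^pL^q\rangle$. For an action we write $xg$ for the image of $x$ under $g$, and $xg_1g_2=(xg_1)g_2$. *)

theory Defs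
  imports "HOL-Analysis.Analysis"
begin

datatype gen = Cg | Lg

text \<open>A letter is a generator with a sign (True = positive power, False = inverse).
  Words are lists of letters; a word a1 a2 ... an denotes the product a1 a2 ... an.\<close>
type_synonym word = "(gen \<times> bool) list"

definition winv :: "word \<Rightarrow> word" where
  "winv w = rev (map (\<lambda>(g, b). (g, \<not> b)) w)"

definition wpow :: "word \<Rightarrow> int \<Rightarrow> word" where
  "wpow w n = (if n \<ge> 0 then concat (replicate (nat n) w)
               else concat (replicate (nat (- n)) (winv w)))"

definition gC :: word where "gC = [(Cg, True)]"
definition gL :: word where "gL = [(Lg, True)]"

definition relR :: "nat \<Rightarrow> word" where
  "relR s = gC @ gL @ gC @ wpow gL (-1) @ wpow gC (-1) @ wpow gL (- int s)
            @ wpow gC (-1) @ wpow gL (-1) @ gC @ gL @ gC @ wpow gL (int s - 1)"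

definition wordM :: word where "wordM = gC"

definition wordL :: "nat \<Rightarrow> word" where
  "wordL s = wpow gC (- (2 * int s - 2)) @ gL @ gC @ wpow gL (int s) @ gC
             @ wpow gL (int s) @ gC @ gL @ wpow gC (- (2 * int s + 9))"

definition relators :: "nat \<Rightarrow> int \<Rightarrow> int \<Rightarrow> word set" where
  "relators s p q = {relR s, wpow wordM p @ wpow (wordL s) q}"

inductive eqG :: "nat \<Rightarrow> int \<Rightarrow> int \<Rightarrow> word \<Rightarrow> word \<Rightarrow> bool"
  for s :: nat and p q :: int where
  refl: "eqG s p q w w"
| sym: "eqG s p q u v \<Longrightarrow> eqG s p q v u"
| trans: "eqG s p q u v \<Longrightarrow> eqG s p q v w \<Longrightarrow> eqG s p q u w"
| cancel: "eqG s p q (u @ [(g, b), (g, \<not> b)] @ v) (u @ v)"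
| relator: "r \<in> relators s p q \<Longrightarrow> eqG s p q (u @ r @ v) (u @ v)"

definition homeo_plus :: "(real \<Rightarrow> real) \<Rightarrow> bool" where
  "homeo_plus f \<longleftrightarrow> (\<exists>g. homeomorphism UNIV UNIV f g) \<and> strict_mono f"

text \<open>Right action of a word, given the action of the generators:
  x(a1 a2 ... an) = (...((x a1) a2)...) an.\<close>
fun act_letter :: "(gen \<Rightarrow> real \<Rightarrow> real) \<Rightarrow> gen \<times> bool \<Rightarrow> real \<Rightarrow> real" where
  "act_letter \<rho> (g, b) = (if b then \<rho> g else inv (\<rho> g))"

fun act_word :: "(gen \<Rightarrow> real \<Rightarrow> real) \<Rightarrow> word \<Rightarrow> real \<Rightarrow> real" where
  "act_word \<rho> [] = id"
| "act_word \<rho> (a # w) = act_word \<rho> w \<circ> act_letter \<rho> a"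

definition is_action :: "nat \<Rightarrow> int \<Rightarrow> int \<Rightarrow> (gen \<Rightarrow> real \<Rightarrow> real) \<Rightarrow> bool" where
  "is_action s p q \<rho> \<longleftrightarrow> (\<forall>g. homeo_plus (\<rho> g)) \<and>
     (\<forall>u v. eqG s p q u v \<longrightarrow> act_word \<rho> u = act_word \<rho> v)"

end

theory Submission
  imports Defs
begin

text \<open>
  Writing P = c l c, the relator R reads P X P l^(s-1) = 1 with
  X = l^-1 c^-1 l^-s c^-1 l^-1, so in the group
      c l c l^(s-1) c l c  =  l c l^s c l,
  a relation in which only positive powers of the generators occur.  Let f and g
  be the actions of c and l.  Since c = M = k^q with q > 0 and k moves every point
  to the right, so does f.  Acting with the relation on a point x and putting
  y = x (c l c l^(s-1)) gives
      y (c l c) = x (l c l^s c l) < x (c l c l^s c l) = y (l c l),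
  while y (c l) < y (c l c); hence y (c l) < y (l c l), and cancelling the
  increasing maps g, f on the outside yields y < y l.  Every y has this form
  because the actions are surjective.
\<close>

lemma winv_Nil [simp]: "winv [] = []"
  by (simp add: winv_def)

lemma winv_append [simp]: "winv (u @ v) = winv v @ winv u"
  by (simp add: winv_def)

lemma winv_winv [simp]: "winv (winv w) = w"
  by (simp add: winv_def rev_map case_prod_unfold comp_def)

lemma winv_concat_replicate [simp]:
  "winv (concat (replicate n w)) = concat (replicate n (winv w))"
  by (simp add: winv_def rev_concat map_concat)

lemma winv_wpow_neg: "winv (wpow w (- int n)) = wpow w (int n)"
  by (cases "n = 0") (simp_all add: wpow_def)

lemma wpow_minus_one: "wpow w (-1) = winv w"
  by (simp add: wpow_def)

lemma eqG_cancel_inverse: "eqG s p q (u @ w @ winv w @ v) (u @ v)"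
proof (induction w arbitrary: u v)
  case Nil
  show ?case by (simp add: eqG.refl)
next
  case (Cons a w)
  obtain g b where a: "a = (g, b)" by fastforce
  have "winv (a # w) = winv w @ [(g, \<not> b)]"
    by (simp add: winv_def a)
  then have "u @ (a # w) @ winv (a # w) @ v = (u @ [a]) @ w @ winv w @ ((g, \<not> b) # v)"
    by simp
  moreover have "eqG s p q ((u @ [a]) @ w @ winv w @ ((g, \<not> b) # v)) (u @ [(g, b), (g, \<not> b)] @ v)"
    using Cons.IH[of "u @ [a]" "(g, \<not> b) # v"] by (simp add: a)
  ultimately show ?case
    using eqG.cancel eqG.trans by metis
qed

lemma eqG_cancel_inverse': "eqG s p q (u @ winv w @ w @ v) (u @ v)"
  using eqG_cancel_inverse[of s p q u "winv w" v] by simp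

lemma relator_positive_form:
  "eqG s p q (gC @ gL @ gC @ wpow gL (int s - 1) @ gC @ gL @ gC)
             (gL @ gC @ wpow gL (int s) @ gC @ gL)"
proof -
  define P where "P = gC @ gL @ gC"
  define X where "X = wpow gL (-1) @ wpow gC (-1) @ wpow gL (- int s) @ wpow gC (-1) @ wpow gL (-1)"
  define Y where "Y = P @ wpow gL (int s - 1) @ P"
  have R: "relR s @ P = P @ X @ Y"
    by (simp add: relR_def P_def X_def Y_def)
  have invX: "winv X = gL @ gC @ wpow gL (int s) @ gC @ gL"
    by (simp add: X_def wpow_minus_one winv_wpow_neg)
  have "eqG s p q (winv X @ winv P @ relR s @ P) (winv X @ winv P @ P)"
    using eqG.relator[of "relR s" s p q "winv X @ winv P" P]
    by (simp add: relators_def)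
  then have "eqG s p q (winv X @ winv P @ P @ X @ Y) (winv X)"
    using eqG_cancel_inverse'[of s p q "winv X" P "[]"] eqG.trans
    by (fastforce simp: R[symmetric])
  moreover have "eqG s p q (winv X @ winv P @ P @ X @ Y) (winv X @ X @ Y)"
    using eqG_cancel_inverse'[of s p q "winv X" P "X @ Y"] by simp
  moreover have "eqG s p q (winv X @ X @ Y) Y"
    using eqG_cancel_inverse'[of s p q "[]" X Y] by simp
  ultimately have "eqG s p q Y (winv X)"
    by (meson eqG.sym eqG.trans)
  then show ?thesis
    by (simp add: Y_def P_def invX)
qed

lemma act_append: "act_word \<rho> (u @ v) = act_word \<rho> v \<circ> act_word \<rho> u"
  by (induction u) auto

lemma act_wpow_nonneg:
  assumes "n \<ge> 0"
  shows "act_word \<rho> (wpow w n) = act_word \<rho> w ^^ nat n"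
proof -
  have "act_word \<rho> (concat (replicate m w)) = act_word \<rho> w ^^ m" for m
    by (induction m) (auto simp: act_append funpow_Suc_right funpow_swap1)
  then show ?thesis
    using assms by (simp add: wpow_def)
qed

lemma act_gC [simp]: "act_word \<rho> gC = \<rho> Cg"
  and act_gL [simp]: "act_word \<rho> gL = \<rho> Lg"
  by (simp_all add: gC_def gL_def)

lemma homeo_plus_strict_mono_surj:
  assumes "homeo_plus h"
  shows "strict_mono h" "surj h"
  using assms unfolding homeo_plus_def homeomorphism_def by auto

lemma funpow_moves_up:
  fixes h :: "'a::order \<Rightarrow> 'a"
  assumes up: "\<And>x. x < h x" and "n > 0"
  shows "x < (h ^^ n) x"
  using \<open>n > 0\<close>
proof (induction n)
  case (Suc n)
  show ?case
  proof (cases "n = 0")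
    case False
    then have "x < (h ^^ n) x" using Suc.IH by simp
    also have "\<dots> < (h ^^ Suc n) x" using up by simp
    finally show ?thesis .
  qed (simp add: up)
qed simp

text \<open>If increasing surjections f, g satisfy the positive relation and f moves every
  point up, then so does g.  Here n plays the role of s - 1.\<close>
lemma positive_relation_moves_up:
  fixes f g :: "'a::linorder \<Rightarrow> 'a"
  assumes mono_f: "strict_mono f" and mono_g: "strict_mono g"
    and surj_f: "surj f" and surj_g: "surj g"
    and f_up: "\<And>x. x < f x"
    and rel: "\<And>x. f (g (f ((g ^^ n) (f (g (f x)))))) = g (f ((g ^^ Suc n) (f (g x))))"
  shows "y < g y"
proof -
  have "surj ((g ^^ n) \<circ> (f \<circ> (g \<circ> f)))"
    by (intro comp_surj surj_fn surj_f surj_g)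
  then obtain x where y: "y = (g ^^ n) (f (g (f x)))"
    by (auto simp: surj_def)
  have mono_gn: "strict_mono (g ^^ Suc n)"
    using mono_g by (induction n) (auto simp: strict_mono_def)
  have "f (g (f y)) = g (f ((g ^^ Suc n) (f (g x))))"
    using rel by (simp add: y)
  also have "\<dots> < g (f ((g ^^ Suc n) (f (g (f x)))))"
    using f_up[of x] by (intro strict_monoD[OF mono_g] strict_monoD[OF mono_f]
        strict_monoD[OF mono_gn])
  also have "\<dots> = g (f (g y))"
    by (simp add: y)
  finally have "g (f y) < g (f (g y))"
    using f_up[of "g (f y)"] by (rule order.strict_trans[rotated])
  then show "y < g y"
    using mono_f mono_g by (simp add: strict_mono_less)
qed

theorem lemma3p4:
  fixes s :: nat and p q :: int and k :: word and \<rho> :: "gen \<Rightarrow> real \<Rightarrow> real"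
  assumes "s \<ge> 3"
    and "coprime p q" and "q > 0"
    and "eqG s p q wordM (wpow k q)"
    and "eqG s p q (wordL s) (wpow k (- p))"
    and "is_action s p q \<rho>"
    and "\<forall>x. act_word \<rho> k x > x"
  shows "\<forall>x. act_word \<rho> gL x > x"
proof -
  have homeo: "homeo_plus (\<rho> Cg)" "homeo_plus (\<rho> Lg)"
    and act_eq: "\<And>u v. eqG s p q u v \<Longrightarrow> act_word \<rho> u = act_word \<rho> v"
    using assms(6) unfolding is_action_def by blast+
  have c_up: "x < \<rho> Cg x" for x
  proof -
    have "\<rho> Cg = act_word \<rho> k ^^ nat q"
      using act_eq[OF assms(4)] assms(3) by (simp add: wordM_def act_wpow_nonneg)
    then show ?thesis
      using funpow_moves_up[of "act_word \<rho> k"] assms(3,7) by simp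
  qed
  have rel: "\<rho> Cg (\<rho> Lg (\<rho> Cg ((\<rho> Lg ^^ (s - 1)) (\<rho> Cg (\<rho> Lg (\<rho> Cg x))))))
      = \<rho> Lg (\<rho> Cg ((\<rho> Lg ^^ Suc (s - 1)) (\<rho> Cg (\<rho> Lg x))))" for x
    using fun_cong[OF act_eq[OF relator_positive_form], of x] assms(1)
    by (simp add: act_append act_wpow_nonneg nat_diff_distrib')
  note c_props = homeo_plus_strict_mono_surj[OF homeo(1)]
  note l_props = homeo_plus_strict_mono_surj[OF homeo(2)]
  show ?thesis
    using positive_relation_moves_up[OF c_props(1) l_props(1) c_props(2) l_props(2) c_up rel]
    by (simp add: gL_def)
qed

end
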